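(* Let $Q$ be a quasi-ribbon tableau and let $\xi(Q)$ be the array obtained from $Q$ by first sliding every row leftwards so that its leftmost cell lies in column $1$, and then sliding all cells upwards along their columns until each column has its topmost cell in row $1$ and no gaps. Then $\xi(Q)$ is a Young tableau, and for every $i\ge1$ such that $f_i(Q)$ is defined, $\xi(f_i(Q))=\tilde f_i(\xi(Q))$.
   Context: A quasi-ribbon tableau of shape $\sigma=(\sigma_1,\dots,\sigma_r)$ is a filling with positive integers of the diagram having $\sigma_i$ cells in row $i$, the leftmost cell of row $i+1$ directly below the rightmost cell of row $i$, weakly increasing along rows and strictly increasing down columns. A Young tableau is a left-justified array with weakly decreasing row lengths, filled with positive integers weakly increasing along rows and strictly increasing down columns. The column reading of a (quasi-ribbon or Young) tableau reads columns left to right, each bottom to top; operators act on tableaux via their column readings (the result is again the column reading of a tableau of the same shape). Quasi-Kashiwara operator $f_i$ on a word $u$: undefined if $u$ contains a (not necessarily consecutive) subsequence $(i+1)\,i$ or no letter $i$; otherwise replaces the rightmost $i$ by $i+1$. Kashiwara operator $\tilde f_i$: replace each $i$ by $+$, each $i+1$ by $-$, delete other letters, then repeatedly delete factors $-+$ until the word is $+^{a}-^{b}$; if $a=0$ undefined, otherwise change the letter $i$ corresponding to the rightmost remaining $+$ into $i+1$. *)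

theory Defs
  imports Main
begin

section \<open>Tableaux as partial fillings of cells (row, column), 1-indexed\<close>

type_synonym tableau = "nat \<times> nat \<Rightarrow> nat option"

definition row_weak :: "tableau \<Rightarrow> bool" where
  "row_weak T \<longleftrightarrow> (\<forall>r c a b. T (r, c) = Some a \<longrightarrow> T (r, Suc c) = Some b \<longrightarrow> a \<le> b)"

definition col_strict :: "tableau \<Rightarrow> bool" where
  "col_strict T \<longleftrightarrow> (\<forall>r c a b. T (r, c) = Some a \<longrightarrow> T (Suc r, c) = Some b \<longrightarrow> a < b)"

definition pos_entries :: "tableau \<Rightarrow> bool" where
  "pos_entries T \<longleftrightarrow> (\<forall>p a. T p = Some a \<longrightarrow> 1 \<le> a)"

text \<open>Quasi-ribbon shape: row r (1-indexed) starts at column qstart; the leftmost cell of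
 row r+1 lies directly below the rightmost cell of row r.\<close>

definition qstart :: "nat list \<Rightarrow> nat \<Rightarrow> nat" where
  "qstart \<sigma> r = 1 + (\<Sum>j<r - 1. \<sigma> ! j - 1)"

definition qr_cells :: "nat list \<Rightarrow> (nat \<times> nat) set" where
  "qr_cells \<sigma> = {(r, c). 1 \<le> r \<and> r \<le> length \<sigma> \<and> qstart \<sigma> r \<le> c \<and> c < qstart \<sigma> r + \<sigma> ! (r - 1)}"

definition is_qrt :: "tableau \<Rightarrow> bool" where
  "is_qrt T \<longleftrightarrow> (\<exists>\<sigma>. (\<forall>x\<in>set \<sigma>. 0 < x) \<and> dom T = qr_cells \<sigma>
      \<and> pos_entries T \<and> row_weak T \<and> col_strict T)"

definition young_cells :: "nat list \<Rightarrow> (nat \<times> nat) set" where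
  "young_cells lam = {(r, c). 1 \<le> r \<and> r \<le> length lam \<and> 1 \<le> c \<and> c \<le> lam ! (r - 1)}"

definition is_young :: "tableau \<Rightarrow> bool" where
  "is_young T \<longleftrightarrow> (\<exists>lam. (\<forall>x\<in>set lam. 0 < x) \<and> sorted_wrt (\<ge>) lam \<and> dom T = young_cells lam
      \<and> pos_entries T \<and> row_weak T \<and> col_strict T)"

definition colcells :: "(nat \<times> nat) set \<Rightarrow> (nat \<times> nat) list" where
  "colcells S = concat (map (\<lambda>c. map (\<lambda>r. (r, c)) (rev (sorted_list_of_set {r. (r, c) \<in> S})))
                          (sorted_list_of_set (snd ` S)))"

definition colreading :: "tableau \<Rightarrow> nat list" where
  "colreading T = map (\<lambda>p. the (T p)) (colcells (dom T))"

definition fill :: "(nat \<times> nat) set \<Rightarrow> nat list \<Rightarrow> tableau" where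
  "fill S w = map_of (zip (colcells S) w)"

definition qf :: "nat \<Rightarrow> nat list \<Rightarrow> nat list option" where
  "qf i u = (if i \<notin> set u \<or> (\<exists>j k. j < k \<and> k < length u \<and> u ! j = i + 1 \<and> u ! k = i) then None
             else Some (u[Max {j. j < length u \<and> u ! j = i} := i + 1]))"

text \<open>Kashiwara operator: signs are encoded as True = +, False = -, each tagged with
 its position in the word.\<close>
fun delpair :: "(bool \<times> nat) list \<Rightarrow> (bool \<times> nat) list option" where
  "delpair ((False, a) # (True, b) # xs) = Some xs"
| "delpair (x # xs) = map_option (Cons x) (delpair xs)"
| "delpair [] = None"

lemma delpair_length: "delpair xs = Some ys \<Longrightarrow> length ys < length xs"
  by (induction xs arbitrary: ys rule: delpair.induct) auto

function reduce_signs :: "(bool \<times> nat) list \<Rightarrow> (bool \<times> nat) list" where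
  "reduce_signs xs = (case delpair xs of None \<Rightarrow> xs | Some ys \<Rightarrow> reduce_signs ys)"
  by pat_completeness auto
termination
  by (relation "measure length") (auto dest: delpair_length)

definition kf :: "nat \<Rightarrow> nat list \<Rightarrow> nat list option" where
  "kf i u = (let ws = [(u ! j = i, j). j \<leftarrow> [0..<length u], u ! j = i \<or> u ! j = i + 1];
                 ps = [j. (s, j) \<leftarrow> reduce_signs ws, s]
             in if ps = [] then None else Some (u[last ps := i + 1]))"

definition qfT :: "nat \<Rightarrow> tableau \<Rightarrow> tableau option" where
  "qfT i T = map_option (fill (dom T)) (qf i (colreading T))"

definition kfT :: "nat \<Rightarrow> tableau \<Rightarrow> tableau option" where
  "kfT i T = map_option (fill (dom T)) (kf i (colreading T))"

definition leftjust :: "tableau \<Rightarrow> tableau" where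
  "leftjust T = (\<lambda>(r, c). if 1 \<le> c \<and> (\<exists>c0. (r, c0) \<in> dom T)
                           then T (r, c + Min {c0. (r, c0) \<in> dom T} - 1) else None)"

definition upslide :: "tableau \<Rightarrow> tableau" where
  "upslide T = (\<lambda>(r, c). let rs = sorted_list_of_set {r0. (r0, c) \<in> dom T} in
                  if 1 \<le> r \<and> r \<le> length rs then T (rs ! (r - 1), c) else None)"

definition xi :: "tableau \<Rightarrow> tableau" where
  "xi T = upslide (leftjust T)"

end

(*
  Entries of a quasi-ribbon tableau Q increase strictly from one row to the next, so each
  value occupies a single row of Q, and \<xi> moves the cells of one row by a common horizontal
  translation. Hence the rightmost i of the column reading of Q is carried to the rightmost i
  of the reading of \<xi>(Q). Neither reading contains a subsequence (i+1) i: an i+1 read before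
  an i in \<xi>(Q) would have to come from a lower row of Q than that i, and the ribbon condition
  would then put an i directly above an i+1 in Q. Without such a subsequence no pair -+ cancels
  in the bracketing, so the Kashiwara operator changes the rightmost i, just as f_i does.

  The columns of the left-justified array are nested, so sliding them up yields a partition
  shape; a cell of \<xi>(Q) comes from a row of Q no higher than the cell to its left, which
  together with the strict increase between rows gives the tableau conditions.
*)

theory Submission
  imports Defs
begin

section \<open>Column reading\<close>

definition col_before :: "nat \<times> nat \<Rightarrow> nat \<times> nat \<Rightarrow> bool" where
  "col_before p q \<longleftrightarrow> snd p < snd q \<or> (snd p = snd q \<and> fst q < fst p)"

lemma col_before_irrefl: "\<not> col_before p p"
  by (simp add: col_before_def)

lemma col_before_asym: "col_before p q \<Longrightarrow> \<not> col_before q p"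
  by (auto simp: col_before_def)

lemma col_before_total: "p \<noteq> q \<Longrightarrow> col_before p q \<or> col_before q p"
  by (auto simp: col_before_def prod_eq_iff)

lemma sorted_colcells: "sorted_wrt col_before (colcells S)"
proof -
  have column: "sorted_wrt col_before (map (\<lambda>r. (r, c)) (rev (sorted_list_of_set {r. (r, c) \<in> S})))"
    for c by (simp add: sorted_wrt_map sorted_wrt_rev col_before_def)
  have "sorted_wrt col_before
          (concat (map (\<lambda>c. map (\<lambda>r. (r, c)) (rev (sorted_list_of_set {r. (r, c) \<in> S}))) cs))"
    if "sorted_wrt (<) cs" for cs
    using that by (induction cs) (auto simp: sorted_wrt_append column col_before_def)
  then show ?thesis
    unfolding colcells_def by (simp add: strict_sorted_list_of_set)
qed

lemma distinct_colcells: "distinct (colcells S)"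
proof -
  have "sorted_wrt col_before xs \<Longrightarrow> distinct xs" for xs
    by (induction xs) (auto simp: col_before_irrefl)
  then show ?thesis using sorted_colcells .
qed

lemma set_colcells:
  assumes "finite S"
  shows "set (colcells S) = S"
proof -
  have "finite {r. (r, c) \<in> S}" for c
    using assms by (rule finite_subset[rotated, OF finite_imageI[of _ fst]]) force
  with assms show ?thesis
    unfolding colcells_def by (auto intro: rev_image_eqI)
qed

lemma colcells_index_less_iff:
  assumes "j < length (colcells S)" "k < length (colcells S)"
  shows "j < k \<longleftrightarrow> col_before (colcells S ! j) (colcells S ! k)"
proof
  show "j < k \<Longrightarrow> col_before (colcells S ! j) (colcells S ! k)"
    using sorted_wrt_nth_less[OF sorted_colcells _ assms(2)] by blast
  assume before: "col_before (colcells S ! j) (colcells S ! k)"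
  show "j < k"
  proof (rule ccontr)
    assume "\<not> j < k"
    then consider "j = k" | "k < j" by arith
    then show False
      using before sorted_wrt_nth_less[OF sorted_colcells _ assms(1)]
      by cases (auto simp: col_before_irrefl dest: col_before_asym)
  qed
qed

lemma length_colreading: "length (colreading T) = length (colcells (dom T))"
  by (simp add: colreading_def)

lemma colreading_nth:
  assumes "finite (dom T)" "j < length (colreading T)"
  shows "T (colcells (dom T) ! j) = Some (colreading T ! j)"
proof -
  have "colcells (dom T) ! j \<in> dom T"
    using assms set_colcells nth_mem by (metis length_colreading)
  then show ?thesis using assms(2) by (auto simp: colreading_def)
qed

lemma cell_index_colcells:
  assumes "finite (dom T)" "T p = Some a"
  obtains j where "j < length (colreading T)" "colcells (dom T) ! j = p" "colreading T ! j = a"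
proof -
  have "p \<in> set (colcells (dom T))" using assms set_colcells by blast
  then obtain j where j: "j < length (colcells (dom T))" "colcells (dom T) ! j = p"
    by (metis in_set_conv_nth)
  with assms colreading_nth[of T j] show ?thesis
    by (intro that) (auto simp: length_colreading)
qed

lemma fill_colreading_update:
  assumes fin: "finite (dom T)" and j: "j < length (colreading T)"
  shows "fill (dom T) ((colreading T)[j := v]) = T(colcells (dom T) ! j \<mapsto> v)"
proof
  fix x
  let ?cs = "colcells (dom T)"
  let ?w = "(colreading T)[j := v]"
  have len: "length ?cs = length ?w" by (simp add: length_colreading)
  show "fill (dom T) ?w x = (T(?cs ! j \<mapsto> v)) x"
  proof (cases "x \<in> set ?cs")
    case True
    then obtain k where k: "k < length ?cs" "?cs ! k = x" by (metis in_set_conv_nth)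
    have "fill (dom T) ?w x = Some (?w ! k)"
      unfolding fill_def using map_of_zip_nth[OF len distinct_colcells] k len by metis
    moreover have "?cs ! j = ?cs ! k \<longleftrightarrow> j = k"
      using nth_eq_iff_index_eq[OF distinct_colcells] k j by (metis length_colreading)
    ultimately show ?thesis using k colreading_nth[OF fin, of k] len by auto
  next
    case False
    then have "fill (dom T) ?w x = None"
      unfolding fill_def by (auto simp: map_of_eq_None_iff dest: set_zip_leftD)
    moreover have "x \<notin> dom T" "?cs ! j \<noteq> x"
      using False j set_colcells[OF fin] by (auto simp: length_colreading)
    ultimately show ?thesis by (simp add: domIff)
  qed
qed

section \<open>Quasi-Kashiwara and Kashiwara operators\<close>

lemma delpair_sorted_None: "sorted_wrt (\<lambda>x y. fst y \<longrightarrow> fst x) xs \<Longrightarrow> delpair xs = None"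
  by (induction xs rule: delpair.induct) auto

lemma last_filter_upt:
  assumes "\<exists>j<n. P j"
  shows "last (filter P [0..<n]) = Max {j. j < n \<and> P j}"
proof -
  have "sorted (filter P [0..<n])" "filter P [0..<n] \<noteq> []"
    using assms by (auto simp: sorted_wrt_filter filter_empty_conv)
  show ?thesis
  proof (rule sym, intro Max_eqI)
    show "finite {j. j < n \<and> P j}" by simp
  next
    fix j assume "j \<in> {j. j < n \<and> P j}"
    then obtain k where "k < length (filter P [0..<n])" "filter P [0..<n] ! k = j"
      by (metis in_set_conv_nth mem_Collect_eq set_filter set_upt atLeastLessThan_iff zero_le)
    then show "j \<le> last (filter P [0..<n])"
      using sorted_nth_mono[OF \<open>sorted (filter P [0..<n])\<close>, of k "length (filter P [0..<n]) - 1"]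
        last_conv_nth[OF \<open>filter P [0..<n] \<noteq> []\<close>] by simp
  next
    show "last (filter P [0..<n]) \<in> {j. j < n \<and> P j}"
      using last_in_set[OF \<open>filter P [0..<n] \<noteq> []\<close>] by auto
  qed
qed

text \<open>Without a factor \<open>(i+1) i\<close> in the signs no pair \<open>-+\<close> cancels, so \<open>\<tilde>f\<^sub>i\<close> changes the
  rightmost \<open>i\<close>, exactly as \<open>f\<^sub>i\<close> does.\<close>
lemma kf_eq_qf:
  assumes "qf i u = Some v"
  shows "kf i u = Some v"
proof -
  have ex: "\<exists>j<length u. u ! j = i"
    and no_inv: "\<not> (\<exists>j k. j < k \<and> k < length u \<and> u ! j = i + 1 \<and> u ! k = i)"
    and v: "v = u[Max {j. j < length u \<and> u ! j = i} := i + 1]"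
    using assms by (auto simp: qf_def in_set_conv_nth split: if_splits)
  define ws where "ws = map (\<lambda>j. (u ! j = i, j)) (filter (\<lambda>j. u ! j = i \<or> u ! j = i + 1) [0..<length u])"
  have "sorted_wrt (\<lambda>x y. fst y \<longrightarrow> fst x) ws"
    unfolding ws_def sorted_wrt_map
    by (rule sorted_wrt_mono_rel[of _ "(<)"]) (use no_inv in \<open>auto intro: sorted_wrt_filter\<close>)
  then have reduced: "reduce_signs ws = ws"
    using delpair_sorted_None by simp
  have plus_positions: "[j. (s, j) \<leftarrow> ws, s] = filter (\<lambda>j. u ! j = i) [0..<length u]"
  proof -
    have signs: "[j. (s, j) \<leftarrow> map (\<lambda>j. (P j, j)) xs, s] = filter P xs"
      for P :: "nat \<Rightarrow> bool" and xs
      by (induction xs) auto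
    have "filter (\<lambda>j. u ! j = i) (filter (\<lambda>j. u ! j = i \<or> u ! j = i + 1) [0..<length u])
        = filter (\<lambda>j. u ! j = i) [0..<length u]"
      unfolding filter_filter by (rule filter_cong) auto
    then show ?thesis
      unfolding ws_def signs .
  qed
  have "[(P j, j). j \<leftarrow> xs, R j] = map (\<lambda>j. (P j, j)) (filter R xs)"
    for P R :: "nat \<Rightarrow> bool" and xs
    by (induction xs) auto
  then have comprehension: "[(u ! j = i, j). j \<leftarrow> [0..<length u], u ! j = i \<or> u ! j = i + 1] = ws"
    unfolding ws_def .
  have "kf i u = (if filter (\<lambda>j. u ! j = i) [0..<length u] = [] then None
      else Some (u[last (filter (\<lambda>j. u ! j = i) [0..<length u]) := i + 1]))"
    unfolding kf_def Let_def comprehension reduced plus_positions ..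
  then show ?thesis
    using ex v last_filter_upt[OF ex] by (auto simp: filter_empty_conv)
qed

lemma kfT_eq_qfT: "qfT i T = Some T' \<Longrightarrow> kfT i T = Some T'"
  using kf_eq_qf unfolding qfT_def kfT_def by blast

definition read_before :: "tableau \<Rightarrow> nat \<Rightarrow> nat \<Rightarrow> bool" where
  "read_before T a b \<longleftrightarrow> (\<exists>p q. col_before p q \<and> T p = Some a \<and> T q = Some b)"

definition last_read :: "tableau \<Rightarrow> nat \<Rightarrow> nat \<times> nat \<Rightarrow> bool" where
  "last_read T a p \<longleftrightarrow> T p = Some a \<and> (\<forall>q. T q = Some a \<longrightarrow> \<not> col_before p q)"

lemma last_read_unique: "last_read T a p \<Longrightarrow> last_read T a q \<Longrightarrow> p = q"
  unfolding last_read_def by (metis col_before_total)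

lemma read_before_iff_colreading:
  assumes "finite (dom T)"
  shows "read_before T a b \<longleftrightarrow>
    (\<exists>j k. j < k \<and> k < length (colreading T) \<and> colreading T ! j = a \<and> colreading T ! k = b)"
proof
  assume "read_before T a b"
  then obtain p q where pq: "col_before p q" "T p = Some a" "T q = Some b"
    unfolding read_before_def by blast
  obtain j k where "j < length (colreading T)" "colcells (dom T) ! j = p" "colreading T ! j = a"
    "k < length (colreading T)" "colcells (dom T) ! k = q" "colreading T ! k = b"
    using cell_index_colcells[OF assms pq(2)] cell_index_colcells[OF assms pq(3)] by metis
  with pq(1) show "\<exists>j k. j < k \<and> k < length (colreading T) \<and> colreading T ! j = a \<and> colreading T ! k = b"
    using colcells_index_less_iff by (metis length_colreading)
next
  assume "\<exists>j k. j < k \<and> k < length (colreading T) \<and> colreading T ! j = a \<and> colreading T ! k = b"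
  then obtain j k where "j < k" "k < length (colreading T)" "colreading T ! j = a" "colreading T ! k = b"
    by blast
  moreover from this have "col_before (colcells (dom T) ! j) (colcells (dom T) ! k)"
    using colcells_index_less_iff[of j "dom T" k] by (simp add: length_colreading)
  ultimately show "read_before T a b"
    unfolding read_before_def using colreading_nth[OF assms, of j] colreading_nth[OF assms, of k]
    by (metis order.strict_trans)
qed

lemma last_read_Max_index:
  assumes fin: "finite (dom T)" and a: "a \<in> set (colreading T)"
  shows "last_read T a (colcells (dom T) ! Max {j. j < length (colreading T) \<and> colreading T ! j = a})"
    (is "last_read T a (colcells (dom T) ! ?m)")
proof -
  have "{j. j < length (colreading T) \<and> colreading T ! j = a} \<noteq> {}"
    using a by (auto simp: in_set_conv_nth)
  then have m: "?m < length (colreading T)" "colreading T ! ?m = a"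
    using Max_in[of "{j. j < length (colreading T) \<and> colreading T ! j = a}"] by auto
  have "\<not> col_before (colcells (dom T) ! ?m) q" if q: "T q = Some a" for q
  proof
    assume before: "col_before (colcells (dom T) ! ?m) q"
    obtain k where k: "k < length (colreading T)" "colcells (dom T) ! k = q" "colreading T ! k = a"
      using cell_index_colcells[OF fin q] by metis
    then have "?m < k"
      using before m colcells_index_less_iff by (metis length_colreading)
    moreover have "k \<le> ?m" using k by (intro Max_ge) auto
    ultimately show False by simp
  qed
  then show ?thesis
    unfolding last_read_def using colreading_nth[OF fin m(1)] m(2) by simp
qed

lemma qfT_eq_Some_iff:
  assumes fin: "finite (dom T)"
  shows "qfT i T = Some T' \<longleftrightarrow>
    \<not> read_before T (i + 1) i \<and> (\<exists>p. last_read T i p \<and> T' = T(p \<mapsto> i + 1))"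
proof -
  define m where "m = Max {j. j < length (colreading T) \<and> colreading T ! j = i}"
  have occurs: "i \<in> set (colreading T) \<longleftrightarrow> (\<exists>p. T p = Some i)"
    using cell_index_colcells[OF fin] colreading_nth[OF fin] by (metis in_set_conv_nth)
  show ?thesis
  proof (cases "read_before T (i + 1) i \<or> i \<notin> set (colreading T)")
    case True
    then have "qfT i T = None"
      unfolding qfT_def qf_def read_before_iff_colreading[OF fin, symmetric] by auto
    moreover have "\<not> last_read T i p" if "i \<notin> set (colreading T)" for p
      using occurs that unfolding last_read_def by blast
    ultimately show ?thesis
      using True by auto
  next
    case False
    then have "{j. j < length (colreading T) \<and> colreading T ! j = i} \<noteq> {}"
      by (auto simp: in_set_conv_nth)
    then have "m < length (colreading T)"
      unfolding m_def using Max_in[of "{j. j < length (colreading T) \<and> colreading T ! j = i}"] by auto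
    then have "qfT i T = Some (T(colcells (dom T) ! m \<mapsto> i + 1))"
      unfolding qfT_def qf_def read_before_iff_colreading[OF fin, symmetric] m_def[symmetric]
      using False fill_colreading_update[OF fin] by simp
    moreover have "last_read T i (colcells (dom T) ! m)"
      unfolding m_def using False last_read_Max_index[OF fin] by simp
    ultimately show ?thesis
      using False last_read_unique[of T i "colcells (dom T) ! m"] by (metis option.inject)
  qed
qed

section \<open>The map \<open>\<xi>\<close>\<close>

definition row_start :: "(nat \<times> nat) set \<Rightarrow> nat \<Rightarrow> nat" where
  "row_start D r = Min {c. (r, c) \<in> D}"

definition leftjust_src :: "(nat \<times> nat) set \<Rightarrow> nat \<times> nat \<Rightarrow> nat \<times> nat" where
  "leftjust_src D x = (fst x, snd x + row_start D (fst x) - 1)"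

definition leftjust_cells :: "(nat \<times> nat) set \<Rightarrow> (nat \<times> nat) set" where
  "leftjust_cells D = {x. 1 \<le> snd x \<and> (\<exists>c. (fst x, c) \<in> D) \<and> leftjust_src D x \<in> D}"

definition col_rows :: "(nat \<times> nat) set \<Rightarrow> nat \<Rightarrow> nat list" where
  "col_rows D c = sorted_list_of_set {r. (r, c) \<in> D}"

definition xi_cells :: "(nat \<times> nat) set \<Rightarrow> (nat \<times> nat) set" where
  "xi_cells D = {x. 1 \<le> fst x \<and> fst x \<le> length (col_rows (leftjust_cells D) (snd x))}"

definition xi_src :: "(nat \<times> nat) set \<Rightarrow> nat \<times> nat \<Rightarrow> nat \<times> nat" where
  "xi_src D x = leftjust_src D (col_rows (leftjust_cells D) (snd x) ! (fst x - 1), snd x)"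

lemma leftjust_apply:
  "leftjust T x = (if x \<in> leftjust_cells (dom T) then T (leftjust_src (dom T) x) else None)"
  by (cases x) (auto simp: leftjust_def leftjust_cells_def leftjust_src_def row_start_def)

lemma upslide_apply:
  "upslide T x = (if 1 \<le> fst x \<and> fst x \<le> length (col_rows (dom T) (snd x))
                  then T (col_rows (dom T) (snd x) ! (fst x - 1), snd x) else None)"
  by (cases x) (simp add: upslide_def col_rows_def Let_def)

lemma dom_leftjust: "dom (leftjust T) = leftjust_cells (dom T)"
proof -
  have "leftjust T x \<noteq> None \<longleftrightarrow> x \<in> leftjust_cells (dom T)" for x
    unfolding leftjust_apply by (auto simp: leftjust_cells_def)
  then show ?thesis by auto
qed

lemma finite_column_leftjust_cells:
  assumes "finite D"
  shows "finite {r. (r, c) \<in> leftjust_cells D}"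
proof (rule finite_subset[of _ "fst ` D"])
  show "{r. (r, c) \<in> leftjust_cells D} \<subseteq> fst ` D"
    by (force simp: leftjust_cells_def leftjust_src_def)
qed (use assms in simp)

lemma set_col_rows_leftjust_cells:
  "finite D \<Longrightarrow> set (col_rows (leftjust_cells D) c) = {r. (r, c) \<in> leftjust_cells D}"
  unfolding col_rows_def by (simp add: finite_column_leftjust_cells)

lemma xi_cells_col_rows_mem:
  assumes "finite D" "x \<in> xi_cells D"
  shows "(col_rows (leftjust_cells D) (snd x) ! (fst x - 1), snd x) \<in> leftjust_cells D"
proof -
  have "col_rows (leftjust_cells D) (snd x) ! (fst x - 1) \<in> set (col_rows (leftjust_cells D) (snd x))"
    using assms(2) by (auto simp: xi_cells_def)
  then show ?thesis using set_col_rows_leftjust_cells[OF assms(1)] by simp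
qed

lemma xi_src_mem: "finite D \<Longrightarrow> x \<in> xi_cells D \<Longrightarrow> xi_src D x \<in> D"
  using xi_cells_col_rows_mem by (simp add: xi_src_def leftjust_cells_def)

lemma xi_apply:
  assumes "finite (dom T)"
  shows "xi T x = (if x \<in> xi_cells (dom T) then T (xi_src (dom T) x) else None)"
  using xi_cells_col_rows_mem[OF assms, of x]
  unfolding xi_def upslide_apply dom_leftjust leftjust_apply
  by (auto simp: xi_cells_def xi_src_def)

lemma dom_xi:
  assumes "finite (dom T)"
  shows "dom (xi T) = xi_cells (dom T)"
  using xi_src_mem[OF assms] by (auto simp: xi_apply[OF assms] domIff split: if_splits)

lemma one_le_snd_xi_cells: "finite D \<Longrightarrow> x \<in> xi_cells D \<Longrightarrow> 1 \<le> snd x"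
  using xi_cells_col_rows_mem by (simp add: leftjust_cells_def)

lemma fst_xi_src: "fst (xi_src D x) = col_rows (leftjust_cells D) (snd x) ! (fst x - 1)"
  by (simp add: xi_src_def leftjust_src_def)

text \<open>Within one row of the source, \<open>\<xi>\<close> is a horizontal translation.\<close>
lemma xi_src_same_row_shift:
  assumes "finite D" "x \<in> xi_cells D" "y \<in> xi_cells D" "fst (xi_src D x) = fst (xi_src D y)"
  shows "snd (xi_src D x) + snd y = snd (xi_src D y) + snd x"
  using assms(4) one_le_snd_xi_cells[OF assms(1,2)] one_le_snd_xi_cells[OF assms(1,3)]
  by (simp add: xi_src_def leftjust_src_def)

lemma inj_on_xi_src:
  assumes fin: "finite D"
  shows "inj_on (xi_src D) (xi_cells D)"
proof (rule inj_onI)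
  fix x y assume x: "x \<in> xi_cells D" and y: "y \<in> xi_cells D" and eq: "xi_src D x = xi_src D y"
  then have "snd x = snd y"
    using xi_src_same_row_shift[OF fin x y] by simp
  moreover have "fst x = fst y"
  proof -
    let ?rs = "col_rows (leftjust_cells D) (snd x)"
    have "distinct ?rs" by (simp add: col_rows_def)
    moreover have "fst x - 1 < length ?rs" "fst y - 1 < length ?rs" "1 \<le> fst x" "1 \<le> fst y"
      using x y \<open>snd x = snd y\<close> by (auto simp: xi_cells_def)
    moreover have "?rs ! (fst x - 1) = ?rs ! (fst y - 1)"
      using eq \<open>snd x = snd y\<close> fst_xi_src by metis
    ultimately show ?thesis by (simp add: nth_eq_iff_index_eq)
  qed
  ultimately show "x = y" by (simp add: prod_eq_iff)
qed

lemma xi_src_image: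
  assumes fin: "finite D"
  shows "xi_src D ` xi_cells D = D"
proof
  show "xi_src D ` xi_cells D \<subseteq> D" using xi_src_mem[OF fin] by blast
  show "D \<subseteq> xi_src D ` xi_cells D"
  proof
    fix p assume p: "p \<in> D"
    obtain r c where rc: "p = (r, c)" by (cases p)
    have "finite {c. (r, c) \<in> D}"
      using fin by (rule finite_subset[rotated, OF finite_imageI[of _ snd]]) force
    then have start: "row_start D r \<le> c"
      using p rc by (auto simp: row_start_def intro: Min_le)
    define c' where "c' = c + 1 - row_start D r"
    have src: "leftjust_src D (r, c') = p"
      using start rc by (simp add: leftjust_src_def c'_def)
    then have "(r, c') \<in> leftjust_cells D"
      using p rc start by (auto simp: leftjust_cells_def c'_def)
    then obtain k where k: "k < length (col_rows (leftjust_cells D) c')"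
        "col_rows (leftjust_cells D) c' ! k = r"
      using set_col_rows_leftjust_cells[OF fin] by (metis in_set_conv_nth mem_Collect_eq)
    then have "(Suc k, c') \<in> xi_cells D" "xi_src D (Suc k, c') = p"
      using src by (auto simp: xi_cells_def xi_src_def)
    then show "p \<in> xi_src D ` xi_cells D" by blast
  qed
qed

lemma bij_betw_xi_src: "finite D \<Longrightarrow> bij_betw (xi_src D) (xi_cells D) D"
  by (simp add: bij_betw_def inj_on_xi_src xi_src_image)

lemma finite_xi_cells: "finite D \<Longrightarrow> finite (xi_cells D)"
  using bij_betw_finite[OF bij_betw_xi_src] by blast

lemma xi_update:
  assumes fin: "finite (dom T)" and x: "x \<in> xi_cells (dom T)" "xi_src (dom T) x = p"
  shows "xi (T(p \<mapsto> v)) = (xi T)(x \<mapsto> v)"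
proof
  fix y
  have "p \<in> dom T" using xi_src_mem[OF fin] x by blast
  then have "dom (T(p \<mapsto> v)) = dom T" by auto
  then have updated: "xi (T(p \<mapsto> v)) y
      = (if y \<in> xi_cells (dom T) then (T(p \<mapsto> v)) (xi_src (dom T) y) else None)"
    using xi_apply[of "T(p \<mapsto> v)" y] fin by simp
  have other: "xi_src (dom T) y \<noteq> p" if "y \<in> xi_cells (dom T)" "y \<noteq> x"
    using inj_on_xi_src[OF fin] x that by (auto dest: inj_onD)
  show "xi (T(p \<mapsto> v)) y = ((xi T)(x \<mapsto> v)) y"
  proof (cases "y = x")
    case True
    then show ?thesis using updated x by simp
  next
    case False
    then show ?thesis using updated other by (simp add: xi_apply[OF fin])
  qed
qed

section \<open>Young shapes\<close>

lemma downclosed_nat_set_eq: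
  fixes A :: "nat set"
  assumes fin: "finite A" and pos: "\<And>c. c \<in> A \<Longrightarrow> 1 \<le> c"
    and down: "\<And>c c'. c \<in> A \<Longrightarrow> 1 \<le> c' \<Longrightarrow> c' \<le> c \<Longrightarrow> c' \<in> A"
  shows "A = {1..card A}"
proof (cases "A = {}")
  case False
  then have "Max A \<in> A" using fin by simp
  have "A = {1..Max A}"
  proof
    show "A \<subseteq> {1..Max A}" using fin pos by (simp add: subset_iff)
    show "{1..Max A} \<subseteq> A" using down[OF \<open>Max A \<in> A\<close>] by auto
  qed
  then show ?thesis by (metis card_atLeastAtMost diff_Suc_1)
qed simp

lemma young_cells_of_downclosed:
  assumes fin: "finite S" and pos: "\<And>r c. (r, c) \<in> S \<Longrightarrow> 1 \<le> r \<and> 1 \<le> c"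
    and down: "\<And>r c r' c'. (r, c) \<in> S \<Longrightarrow> 1 \<le> r' \<Longrightarrow> r' \<le> r \<Longrightarrow> 1 \<le> c' \<Longrightarrow> c' \<le> c \<Longrightarrow> (r', c') \<in> S"
  obtains lam where "\<forall>x\<in>set lam. 0 < x" "sorted_wrt (\<ge>) lam" "S = young_cells lam"
proof
  define row where "row r = {c. (r, c) \<in> S}" for r
  define n where "n = card {r. (r, 1) \<in> S}"
  define lam where "lam = map (\<lambda>r. card (row r)) [1..<Suc n]"
  have "finite {r. (r, 1) \<in> S}"
    by (rule finite_subset[of _ "fst ` S"]) (auto simp: fin intro: rev_image_eqI)
  then have "{r. (r, 1) \<in> S} = {1..n}"
    unfolding n_def by (rule downclosed_nat_set_eq) (use pos down[of _ 1 _ 1] in auto)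
  then have first_col: "(r, 1) \<in> S \<longleftrightarrow> 1 \<le> r \<and> r \<le> n" for r
    by (metis (mono_tags) atLeastAtMost_iff mem_Collect_eq)
  have in_row: "c \<in> row r \<longleftrightarrow> 1 \<le> c \<and> c \<le> card (row r)" for r c
  proof -
    have "finite (row r)"
      unfolding row_def by (rule finite_subset[of _ "snd ` S"]) (auto simp: fin intro: rev_image_eqI)
    then have "row r = {1..card (row r)}"
      by (rule downclosed_nat_set_eq) (use pos down[of r _ r] in \<open>auto simp: row_def\<close>)
    then show ?thesis by (metis atLeastAtMost_iff)
  qed
  have lam_nth: "lam ! (r - 1) = card (row r)" if "1 \<le> r" "r \<le> n" for r
    using that nth_upt[of 1 "r - 1" "Suc n"] by (simp add: lam_def del: upt_Suc)
  show "\<forall>x\<in>set lam. 0 < x"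
  proof
    fix x assume "x \<in> set lam"
    then obtain r where "1 \<le> r" "r \<le> n" "x = card (row r)" by (auto simp: lam_def)
    then show "0 < x" using first_col in_row[of 1 r] by (simp add: row_def)
  qed
  show "sorted_wrt (\<ge>) lam"
    unfolding lam_def sorted_wrt_map
  proof (rule sorted_wrt_mono_rel[of _ "(<)"])
    fix r r' assume "r \<in> set [1..<Suc n]" "r' \<in> set [1..<Suc n]" "r < r'"
    then have "row r' \<subseteq> row r"
      using down[of r' _ r] pos by (auto simp: row_def)
    then show "card (row r') \<le> card (row r)"
      using in_row[of "card (row r')" r'] in_row[of "card (row r')" r] by auto
  qed (rule sorted_wrt_upt)
  show "S = young_cells lam"
  proof (rule set_eqI)
    fix x :: "nat \<times> nat"
    obtain r c where x: "x = (r, c)" by (cases x)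
    have "(r, c) \<in> S \<longleftrightarrow> 1 \<le> r \<and> r \<le> n \<and> c \<in> row r"
      using first_col down[of r c r 1] pos by (auto simp: row_def)
    also have "\<dots> \<longleftrightarrow> 1 \<le> r \<and> r \<le> n \<and> 1 \<le> c \<and> c \<le> lam ! (r - 1)"
      using in_row lam_nth by auto
    finally show "x \<in> S \<longleftrightarrow> x \<in> young_cells lam"
      by (simp add: x young_cells_def lam_def del: upt_Suc)
  qed
qed

lemma sorted_list_of_set_nth_le_subset:
  fixes A B :: "nat set"
  assumes "finite A" "B \<subseteq> A" "k < card B"
  shows "sorted_list_of_set A ! k \<le> sorted_list_of_set B ! k"
proof (rule ccontr)
  define xs where "xs = sorted_list_of_set A"
  define ys where "ys = sorted_list_of_set B"
  have "finite B" using assms finite_subset by blast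
  then have ys: "sorted ys" "distinct ys" "set ys = B" "length ys = card B"
    by (auto simp: ys_def)
  have xs: "sorted xs" "set xs = A" using assms(1) by (auto simp: xs_def)
  assume "\<not> xs ! k \<le> ys ! k"
  text \<open>Then the \<open>k + 1\<close> smallest elements of \<open>B\<close> lie among the \<open>k\<close> smallest of \<open>A\<close>.\<close>
  have "set (take (Suc k) ys) \<subseteq> set (take k xs)"
  proof
    fix s assume "s \<in> set (take (Suc k) ys)"
    then obtain j where j: "j < Suc k" "j < length ys" "ys ! j = s"
      by (auto simp: in_set_conv_nth)
    then have "s < xs ! k"
      using sorted_nth_mono[OF ys(1), of j k] assms(3) ys(4) \<open>\<not> xs ! k \<le> ys ! k\<close> by simp
    moreover have "s \<in> set xs" using j assms(2,3) ys xs(2) by (metis nth_mem order.strict_trans1 subsetD)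
    then obtain j' where "j' < length xs" "xs ! j' = s" by (metis in_set_conv_nth)
    ultimately have "j' < k"
      using sorted_nth_mono[OF xs(1), of k j'] by (metis not_le not_less)
    with \<open>j' < length xs\<close> \<open>xs ! j' = s\<close> show "s \<in> set (take k xs)"
      by (auto simp: in_set_conv_nth intro!: exI[of _ j'])
  qed
  then have "card (set (take (Suc k) ys)) \<le> card (set (take k xs))"
    by (simp add: card_mono)
  moreover have "card (set (take (Suc k) ys)) = Suc k"
    using ys assms(3) by (simp add: distinct_card)
  moreover have "card (set (take k xs)) \<le> k"
    using card_length[of "take k xs"] by simp
  ultimately show False by simp
qed

lemma xi_cells_downclosed:
  assumes fin: "finite D"
    and left_closed: "\<And>r c c'. (r, c) \<in> leftjust_cells D \<Longrightarrow> 1 \<le> c' \<Longrightarrow> c' \<le> c \<Longrightarrow> (r, c') \<in> leftjust_cells D"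
    and "(k, c) \<in> xi_cells D" "1 \<le> k'" "k' \<le> k" "1 \<le> c'" "c' \<le> c"
  shows "(k', c') \<in> xi_cells D"
proof -
  have "{r. (r, c) \<in> leftjust_cells D} \<subseteq> {r. (r, c') \<in> leftjust_cells D}"
    using left_closed assms(6,7) by blast
  then have "length (col_rows (leftjust_cells D) c) \<le> length (col_rows (leftjust_cells D) c')"
    unfolding col_rows_def by (simp add: card_mono finite_column_leftjust_cells[OF fin])
  then show ?thesis using assms(3-5) by (simp add: xi_cells_def)
qed

section \<open>Quasi-ribbon tableaux\<close>

lemma qstart_Suc:
  assumes "1 \<le> r" "r \<le> length \<sigma>" "\<forall>x\<in>set \<sigma>. 0 < x"
  shows "qstart \<sigma> (Suc r) = qstart \<sigma> r + \<sigma> ! (r - 1) - 1"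
proof -
  obtain r' where r: "r = Suc r'" using assms(1) by (cases r) auto
  have "0 < \<sigma> ! r'" using assms(2,3) r by auto
  then show ?thesis unfolding qstart_def r by simp
qed

lemma finite_qr_cells: "finite (qr_cells \<sigma>)"
proof (rule finite_subset)
  show "qr_cells \<sigma> \<subseteq> {..length \<sigma>} \<times> {..<Max ((\<lambda>r. qstart \<sigma> r + \<sigma> ! (r - 1)) ` {..length \<sigma>})}"
    by (fastforce simp: qr_cells_def intro: Max_ge[THEN less_le_trans[rotated]])
qed simp

locale quasi_ribbon_tableau =
  fixes \<sigma> :: "nat list" and Q :: tableau
  assumes parts_pos: "\<forall>x\<in>set \<sigma>. 0 < x" and dom_Q: "dom Q = qr_cells \<sigma>"
    and entries_pos: "pos_entries Q" and rows_weak: "row_weak Q" and cols_strict: "col_strict Q"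
begin

lemma finite_dom: "finite (dom Q)"
  using dom_Q finite_qr_cells by simp

lemma mem_dom_iff:
  "(r, c) \<in> dom Q \<longleftrightarrow> 1 \<le> r \<and> r \<le> length \<sigma> \<and> qstart \<sigma> r \<le> c \<and> c < qstart \<sigma> r + \<sigma> ! (r - 1)"
  by (simp add: dom_Q qr_cells_def)

lemma row_mono:
  assumes "Q (r, c) = Some a" "Q (r, c') = Some b" "c \<le> c'"
  shows "a \<le> b"
  using assms(2,3)
proof (induction c' arbitrary: b)
  case (Suc c')
  show ?case
  proof (cases "c = Suc c'")
    case False
    then have "c \<le> c'" using Suc.prems by simp
    moreover have "(r, c) \<in> dom Q" "(r, Suc c') \<in> dom Q" using assms(1) Suc.prems by auto
    ultimately have "(r, c') \<in> dom Q" unfolding mem_dom_iff by auto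
    then obtain m where "Q (r, c') = Some m" by blast
    with Suc.IH \<open>c \<le> c'\<close> Suc.prems(1) rows_weak show ?thesis
      unfolding row_weak_def by (meson le_trans)
  qed (use assms(1) Suc.prems in simp)
qed (use assms(1) in simp)

lemma junction_cells:
  assumes "1 \<le> r" "r < length \<sigma>"
  shows "(r, qstart \<sigma> (Suc r)) \<in> dom Q" "(Suc r, qstart \<sigma> (Suc r)) \<in> dom Q"
    and "(r, c) \<in> dom Q \<Longrightarrow> c \<le> qstart \<sigma> (Suc r)"
    and "(Suc r, c') \<in> dom Q \<Longrightarrow> qstart \<sigma> (Suc r) \<le> c'"
  using assms qstart_Suc[of r \<sigma>, OF _ _ parts_pos]
    parts_pos[rule_format, OF nth_mem[OF less_imp_diff_less[OF assms(2), of 1]]]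
    parts_pos[rule_format, OF nth_mem[OF assms(2)]]
  by (auto simp: mem_dom_iff)

lemma less_next_row:
  assumes "Q (r, c) = Some a" "Q (Suc r, c') = Some b"
  shows "a < b"
proof -
  have "(r, c) \<in> dom Q" "(Suc r, c') \<in> dom Q" using assms by blast+
  then have r: "1 \<le> r" "r < length \<sigma>" by (auto simp: mem_dom_iff)
  let ?e = "qstart \<sigma> (Suc r)"
  obtain v w where v: "Q (r, ?e) = Some v" and w: "Q (Suc r, ?e) = Some w"
    using junction_cells(1,2)[OF r] by blast
  have "a \<le> v" using row_mono[OF assms(1) v junction_cells(3)[OF r domI[of Q, OF assms(1)]]] .
  also have "v < w" using cols_strict v w unfolding col_strict_def by blast
  also have "w \<le> b" using row_mono[OF w assms(2) junction_cells(4)[OF r domI[of Q, OF assms(2)]]] .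
  finally show ?thesis .
qed

lemma less_lower_row:
  assumes "Q (r, c) = Some a" "Q (r', c') = Some b" "r < r'"
  shows "a < b"
  using assms(2,3)
proof (induction r' arbitrary: c' b)
  case (Suc r')
  show ?case
  proof (cases "r = r'")
    case False
    then have "r < r'" using Suc.prems by simp
    have "(Suc r', c') \<in> dom Q" using Suc.prems by blast
    then have "(r', qstart \<sigma> r') \<in> dom Q"
      using \<open>r < r'\<close> parts_pos by (auto simp: mem_dom_iff)
    then obtain m where m: "Q (r', qstart \<sigma> r') = Some m" by blast
    show ?thesis using Suc.IH[OF m \<open>r < r'\<close>] less_next_row[OF m Suc.prems(1)] by simp
  qed (use assms(1) Suc.prems less_next_row in blast)
qed simp

lemma same_entry_same_row:
  assumes "Q p = Some a" "Q q = Some a"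
  shows "fst p = fst q"
  using less_lower_row[of "fst p" "snd p" a "fst q" "snd q" a]
    less_lower_row[of "fst q" "snd q" a "fst p" "snd p" a] assms
  by (cases "fst p < fst q"; cases "fst q < fst p") auto

lemma entry_above_successor:
  assumes "Q (r, c) = Some i" "Q (r', c') = Some (Suc i)" "r < r'"
  shows "\<exists>e. Q (r, e) = Some i \<and> Q (Suc r, e) = Some (Suc i)"
proof -
  have "(r, c) \<in> dom Q" "(r', c') \<in> dom Q" using assms by blast+
  then have r: "1 \<le> r" "r < length \<sigma>" using assms(3) by (auto simp: mem_dom_iff)
  let ?e = "qstart \<sigma> (Suc r)"
  obtain v w where v: "Q (r, ?e) = Some v" and w: "Q (Suc r, ?e) = Some w"
    using junction_cells(1,2)[OF r] by blast
  have "i \<le> v" using row_mono[OF assms(1) v junction_cells(3)[OF r domI[of Q, OF assms(1)]]] .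
  moreover have "v < Suc i" using less_lower_row[OF v assms(2,3)] .
  moreover have "v < w" using cols_strict v w unfolding col_strict_def by blast
  moreover have "w \<le> Suc i"
  proof (cases "Suc r = r'")
    case True
    then show ?thesis using row_mono[OF w] junction_cells(4)[OF r] assms(2) by (blast intro: domI)
  next
    case False
    then show ?thesis using less_lower_row[OF w assms(2)] assms(3) by simp
  qed
  ultimately show ?thesis using v w by (intro exI[of _ ?e]) simp
qed

lemma row_start_eq:
  assumes "1 \<le> r" "r \<le> length \<sigma>"
  shows "row_start (dom Q) r = qstart \<sigma> r"
proof -
  have "finite {c. (r, c) \<in> dom Q}"
    by (rule finite_subset[of _ "snd ` dom Q"]) (auto simp: finite_dom intro: rev_image_eqI)
  moreover have "(r, qstart \<sigma> r) \<in> dom Q" using assms parts_pos by (auto simp: mem_dom_iff)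
  ultimately show ?thesis unfolding row_start_def by (intro Min_eqI) (auto simp: mem_dom_iff)
qed

lemma mem_leftjust_cells_iff:
  "(r, c) \<in> leftjust_cells (dom Q) \<longleftrightarrow> 1 \<le> r \<and> r \<le> length \<sigma> \<and> 1 \<le> c \<and> c \<le> \<sigma> ! (r - 1)"
proof -
  have "(\<exists>c. (r, c) \<in> dom Q) \<longleftrightarrow> 1 \<le> r \<and> r \<le> length \<sigma>"
    using parts_pos by (auto simp: mem_dom_iff intro!: exI[of _ "qstart \<sigma> r"])
  then show ?thesis
    using row_start_eq[of r] by (auto simp: leftjust_cells_def leftjust_src_def mem_dom_iff)
qed

lemma xi_Q_apply: "x \<in> xi_cells (dom Q) \<Longrightarrow> xi Q x = Q (xi_src (dom Q) x)"
  by (simp add: xi_apply[OF finite_dom])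

lemma xi_cells_young:
  obtains lam where "\<forall>x\<in>set lam. 0 < x" "sorted_wrt (\<ge>) lam" "xi_cells (dom Q) = young_cells lam"
proof (rule young_cells_of_downclosed)
  show "finite (xi_cells (dom Q))" using finite_xi_cells[OF finite_dom] .
  show "1 \<le> r \<and> 1 \<le> c" if "(r, c) \<in> xi_cells (dom Q)" for r c
    using that one_le_snd_xi_cells[OF finite_dom that] by (simp add: xi_cells_def)
  show "(r', c') \<in> xi_cells (dom Q)"
    if "(r, c) \<in> xi_cells (dom Q)" "1 \<le> r'" "r' \<le> r" "1 \<le> c'" "c' \<le> c" for r c r' c'
    using that by (rule xi_cells_downclosed[OF finite_dom, rotated]) (auto simp: mem_leftjust_cells_iff)
qed

lemma row_weak_xi: "row_weak (xi Q)"
  unfolding row_weak_def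
proof (intro allI impI)
  fix k c a b assume a: "xi Q (k, c) = Some a" and b: "xi Q (k, Suc c) = Some b"
  then have cells: "(k, c) \<in> xi_cells (dom Q)" "(k, Suc c) \<in> xi_cells (dom Q)"
    using dom_xi[OF finite_dom] by blast+
  let ?X = "xi_src (dom Q) (k, c)" and ?Y = "xi_src (dom Q) (k, Suc c)"
  have QX: "Q ?X = Some a" and QY: "Q ?Y = Some b" using a b cells xi_Q_apply by auto
  have "{r. (r, Suc c) \<in> leftjust_cells (dom Q)} \<subseteq> {r. (r, c) \<in> leftjust_cells (dom Q)}"
    using one_le_snd_xi_cells[OF finite_dom cells(1)] by (auto simp: mem_leftjust_cells_iff)
  moreover have "k - 1 < card {r. (r, Suc c) \<in> leftjust_cells (dom Q)}"
    using cells(2) by (auto simp: xi_cells_def col_rows_def)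
  ultimately have "fst ?X \<le> fst ?Y"
    unfolding fst_xi_src col_rows_def
    by (simp add: sorted_list_of_set_nth_le_subset finite_column_leftjust_cells[OF finite_dom])
  then consider "fst ?X = fst ?Y" | "fst ?X < fst ?Y" by linarith
  then show "a \<le> b"
  proof cases
    case 1
    then have "snd ?Y = Suc (snd ?X)"
      using xi_src_same_row_shift[OF finite_dom cells] by simp
    then show ?thesis using rows_weak QX QY 1 unfolding row_weak_def by (metis prod.collapse)
  next
    case 2
    then show ?thesis using less_lower_row QX QY by (metis prod.collapse less_imp_le)
  qed
qed

lemma col_strict_xi: "col_strict (xi Q)"
  unfolding col_strict_def
proof (intro allI impI)
  fix k c a b assume a: "xi Q (k, c) = Some a" and b: "xi Q (Suc k, c) = Some b"
  then have cells: "(k, c) \<in> xi_cells (dom Q)" "(Suc k, c) \<in> xi_cells (dom Q)"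
    using dom_xi[OF finite_dom] by blast+
  let ?rs = "col_rows (leftjust_cells (dom Q)) c"
  have "sorted_wrt (<) ?rs" unfolding col_rows_def by (rule strict_sorted_list_of_set)
  moreover have "1 \<le> k" "k < length ?rs" using cells by (auto simp: xi_cells_def)
  ultimately have "?rs ! (k - 1) < ?rs ! k" by (simp add: sorted_wrt_nth_less)
  then have "fst (xi_src (dom Q) (k, c)) < fst (xi_src (dom Q) (Suc k, c))"
    by (simp add: fst_xi_src)
  then show "a < b"
    using a b cells xi_Q_apply less_lower_row by (metis prod.collapse)
qed

lemma is_young_xi: "is_young (xi Q)"
proof -
  obtain lam where "\<forall>x\<in>set lam. 0 < x" "sorted_wrt (\<ge>) lam" "dom (xi Q) = young_cells lam"
    using xi_cells_young dom_xi[OF finite_dom] by metis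
  moreover have "pos_entries (xi Q)"
    using entries_pos xi_Q_apply dom_xi[OF finite_dom] unfolding pos_entries_def by (metis domI)
  ultimately show ?thesis
    unfolding is_young_def using row_weak_xi col_strict_xi by blast
qed

lemma not_read_before_xi:
  assumes "\<not> read_before Q (i + 1) i"
  shows "\<not> read_before (xi Q) (i + 1) i"
proof
  assume "read_before (xi Q) (i + 1) i"
  then obtain x y where before: "col_before x y" and x: "xi Q x = Some (i + 1)" and y: "xi Q y = Some i"
    unfolding read_before_def by blast
  have cells: "x \<in> xi_cells (dom Q)" "y \<in> xi_cells (dom Q)"
    using x y dom_xi[OF finite_dom] by blast+
  obtain r c r' c' where X: "xi_src (dom Q) x = (r, c)" and Y: "xi_src (dom Q) y = (r', c')"
    by (meson prod.exhaust)
  have QX: "Q (r, c) = Some (Suc i)" and QY: "Q (r', c') = Some i"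
    using x y cells X Y xi_Q_apply by auto
  consider "r < r'" | "r' < r" | "r = r'" by linarith
  then show False
  proof cases
    case 1
    then show False using less_lower_row[OF QX QY] by simp
  next
    case 2
    then obtain e where "Q (r', e) = Some i" "Q (Suc r', e) = Some (Suc i)"
      using entry_above_successor[OF QY QX] by blast
    then have "read_before Q (i + 1) i"
      unfolding read_before_def by (intro exI[of _ "(Suc r', e)"] exI[of _ "(r', e)"]) (simp add: col_before_def)
    with assms show False ..
  next
    case 3
    have "snd x \<le> snd y" using before by (auto simp: col_before_def)
    then have "c \<le> c'"
      using xi_src_same_row_shift[OF finite_dom cells] X Y 3 by simp
    then show False using row_mono[OF QX] QY 3 by fastforce
  qed
qed

lemma last_read_xi:
  assumes p: "last_read Q a p" and y: "y \<in> xi_cells (dom Q)" "xi_src (dom Q) y = p"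
  shows "last_read (xi Q) a y"
  unfolding last_read_def
proof (intro conjI allI impI notI)
  show "xi Q y = Some a" using p y xi_Q_apply by (simp add: last_read_def)
  fix z assume z: "xi Q z = Some a" and before: "col_before y z"
  have cell: "z \<in> xi_cells (dom Q)" using z dom_xi[OF finite_dom] by blast
  let ?Z = "xi_src (dom Q) z"
  have QZ: "Q ?Z = Some a" using z cell xi_Q_apply by simp
  then have "\<not> col_before p ?Z" using p unfolding last_read_def by blast
  moreover have "fst ?Z = fst p"
    using same_entry_same_row[OF QZ] p by (simp add: last_read_def)
  moreover have "snd p + snd z = snd ?Z + snd y"
    using xi_src_same_row_shift[OF finite_dom y(1) cell] y(2) \<open>fst ?Z = fst p\<close> by simp
  ultimately have "snd z = snd y" and "?Z = p"
    using before by (auto simp: col_before_def prod_eq_iff)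
  then have "z = y" using inj_on_xi_src[OF finite_dom] y cell by (auto dest: inj_onD)
  with before show False by (simp add: col_before_irrefl)
qed

lemma qfT_xi:
  assumes "qfT i Q = Some Q'"
  shows "qfT i (xi Q) = Some (xi Q')"
proof -
  obtain p where no_inversion: "\<not> read_before Q (i + 1) i" and p: "last_read Q i p"
    and Q': "Q' = Q(p \<mapsto> i + 1)"
    using assms qfT_eq_Some_iff[OF finite_dom] by blast
  have "p \<in> dom Q" using p by (auto simp: last_read_def)
  then obtain y where y: "y \<in> xi_cells (dom Q)" "xi_src (dom Q) y = p"
    using xi_src_image[OF finite_dom] by (metis imageE)
  have "finite (dom (xi Q))" using finite_xi_cells[OF finite_dom] dom_xi[OF finite_dom] by simp
  moreover have "xi Q' = (xi Q)(y \<mapsto> i + 1)" using xi_update[OF finite_dom y] Q' by simp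
  ultimately show ?thesis
    using qfT_eq_Some_iff not_read_before_xi[OF no_inversion] last_read_xi[OF p y] by blast
qed

end

theorem corollary6p3:
  assumes "is_qrt Q"
  shows "is_young (xi Q) \<and>
         (\<forall>i Q'. 1 \<le> i \<longrightarrow> qfT i Q = Some Q' \<longrightarrow> kfT i (xi Q) = Some (xi Q'))"
proof -
  obtain \<sigma> where "quasi_ribbon_tableau \<sigma> Q"
    using assms unfolding is_qrt_def quasi_ribbon_tableau_def by blast
  then interpret quasi_ribbon_tableau \<sigma> Q .
  show ?thesis
    using is_young_xi qfT_xi kfT_eq_qfT by blast
qed

end
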